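(* Let $(Y,S,\gamma)$ be a machine with $Y,S$ finite sets such that $\gamma(y'\mid y,s)>0$ for all $y,y'\in Y$ and $s\in S$. Then for every finite set $H$ and every consistent Bayesian filtering interpretation $(H,\psi_H,\kappa)$ of $\gamma$, the interpretation map is constant: $\psi_H(\cdot\mid y)=\psi_H(\cdot\mid y')$ for all $y,y'\in Y$.
   Context: For finite sets, a Markov kernel $k\colon X\to P(Z)$ is given by numbers $k(z\mid x)\ge0$ with $\sum_z k(z\mid x)=1$. A machine $(Y,S,\gamma)$ consists of a state set $Y$, an input set $S$ and a Markov kernel $\gamma\colon Y\times S\to P(Y)$. Given $\psi_H\colon Y\to P(H)$ and $\kappa\colon H\to P(H\times S)$, define $\psi_{S,H'}(h,s\mid y)=\sum_{h_0\in H}\psi_H(h_0\mid y)\,\kappa(h,s\mid h_0)$ and $\psi_S(s\mid y)=\sum_{h\in H}\psi_{S,H'}(h,s\mid y)$. The triple $(H,\psi_H,\kappa)$ is a consistent Bayesian filtering interpretation of $\gamma$ if for all $y,y'\in Y$, $s\in S$, $h\in H$: $$\psi_{S,H'}(h,s\mid y)\,\gamma(y'\mid y,s)=\psi_S(s\mid y)\,\gamma(y'\mid y,s)\,\psi_H(h\mid y').$$ *)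

theory Defs
  imports Complex_Main
begin

text \<open>A Markov kernel k : X -> P(Z) between finite sets, written k x z = k(z | x).\<close>
definition markov_kernel :: "('x \<Rightarrow> 'z::finite \<Rightarrow> real) \<Rightarrow> bool" where
  "markov_kernel k \<longleftrightarrow> (\<forall>x z. 0 \<le> k x z) \<and> (\<forall>x. (\<Sum>z\<in>UNIV. k x z) = 1)"

definition psi_SH :: "('y \<Rightarrow> 'h::finite \<Rightarrow> real) \<Rightarrow> ('h \<Rightarrow> 'h \<times> 's \<Rightarrow> real) \<Rightarrow> 'y \<Rightarrow> 'h \<Rightarrow> 's \<Rightarrow> real" where
  "psi_SH psiH kappa y h s = (\<Sum>h0\<in>UNIV. psiH y h0 * kappa h0 (h, s))"

definition psi_S :: "('y \<Rightarrow> 'h::finite \<Rightarrow> real) \<Rightarrow> ('h \<Rightarrow> 'h \<times> 's \<Rightarrow> real) \<Rightarrow> 'y \<Rightarrow> 's \<Rightarrow> real" where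
  "psi_S psiH kappa y s = (\<Sum>h\<in>UNIV. psi_SH psiH kappa y h s)"

definition consistent_bayes_filter ::
  "('y::finite \<times> 's::finite \<Rightarrow> 'y \<Rightarrow> real) \<Rightarrow> ('y \<Rightarrow> 'h::finite \<Rightarrow> real) \<Rightarrow> ('h \<Rightarrow> 'h \<times> 's \<Rightarrow> real) \<Rightarrow> bool" where
  "consistent_bayes_filter gamma psiH kappa \<longleftrightarrow>
     markov_kernel psiH \<and> markov_kernel kappa \<and>
     (\<forall>y y' s h. psi_SH psiH kappa y h s * gamma (y, s) y'
                 = psi_S psiH kappa y s * gamma (y, s) y' * psiH y' h)"

end

theory Submission
  imports Defs
begin

text \<open>Dividing the consistency equation by \<open>\<gamma>(y'|y,s) > 0\<close> gives
  \<open>\<psi>\<^sub>S\<^sub>,\<^sub>H\<^sub>'(h,s|y) = \<psi>\<^sub>S(s|y) \<psi>\<^sub>H(h|y')\<close>; summing over \<open>s\<close> and using that \<open>\<psi>\<^sub>S(\<cdot>|y)\<close> is a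
  probability distribution yields \<open>\<psi>\<^sub>H(h|y') = \<Sum>\<^sub>s \<psi>\<^sub>S\<^sub>,\<^sub>H\<^sub>'(h,s|y)\<close>, whose right-hand side does
  not depend on \<open>y'\<close>.\<close>

lemma sum_psi_S_eq_1:
  fixes psiH :: "'y \<Rightarrow> 'h::finite \<Rightarrow> real" and kappa :: "'h \<Rightarrow> 'h \<times> 's::finite \<Rightarrow> real"
  assumes "markov_kernel psiH" "markov_kernel kappa"
  shows "(\<Sum>s\<in>UNIV. psi_S psiH kappa y s) = 1"
proof -
  have kappa_total: "(\<Sum>s\<in>UNIV. \<Sum>h\<in>UNIV. kappa h0 (h, s)) = 1" for h0
  proof -
    have "(\<Sum>s\<in>UNIV. \<Sum>h\<in>UNIV. kappa h0 (h, s)) = (\<Sum>p\<in>UNIV. kappa h0 p)"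
      by (subst sum.swap)
        (simp add: sum.cartesian_product UNIV_Times_UNIV[symmetric] del: UNIV_Times_UNIV)
    also have "\<dots> = 1"
      using assms(2) by (simp add: markov_kernel_def)
    finally show ?thesis .
  qed
  have "(\<Sum>s\<in>UNIV. psi_S psiH kappa y s)
      = (\<Sum>h0\<in>UNIV. psiH y h0 * (\<Sum>s\<in>UNIV. \<Sum>h\<in>UNIV. kappa h0 (h, s)))"
    unfolding psi_S_def psi_SH_def sum_distrib_left
    by (subst sum.swap, subst (2) sum.swap, rule refl)
  also have "\<dots> = (\<Sum>h0\<in>UNIV. psiH y h0)"
    by (simp add: kappa_total)
  also have "\<dots> = 1"
    using assms(1) by (simp add: markov_kernel_def)
  finally show ?thesis .
qed

lemma consistent_bayes_filter_factorizes:
  assumes "consistent_bayes_filter gamma psiH kappa" and "gamma (y, s) y' \<noteq> 0"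
  shows "psi_SH psiH kappa y h s = psi_S psiH kappa y s * psiH y' h"
proof -
  have "psi_SH psiH kappa y h s * gamma (y, s) y'
      = (psi_S psiH kappa y s * psiH y' h) * gamma (y, s) y'"
    using assms(1) unfolding consistent_bayes_filter_def by (metis mult.commute mult.assoc)
  then show ?thesis
    using assms(2) by simp
qed

lemma consistent_bayes_filter_psiH_eq_marginal:
  assumes "consistent_bayes_filter gamma psiH kappa" and "\<And>s. gamma (y, s) y' \<noteq> 0"
  shows "psiH y' h = (\<Sum>s\<in>UNIV. psi_SH psiH kappa y h s)"
proof -
  have "(\<Sum>s\<in>UNIV. psi_SH psiH kappa y h s) = (\<Sum>s\<in>UNIV. psi_S psiH kappa y s) * psiH y' h"
    using consistent_bayes_filter_factorizes[OF assms(1) assms(2)]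
    by (simp add: sum_distrib_right)
  also have "\<dots> = psiH y' h"
    using assms(1) sum_psi_S_eq_1 unfolding consistent_bayes_filter_def by (metis mult_1)
  finally show ?thesis by simp
qed

theorem mainTheorem4:
  fixes gamma :: "'y::finite \<times> 's::finite \<Rightarrow> 'y \<Rightarrow> real"
    and psiH :: "'y \<Rightarrow> 'h::finite \<Rightarrow> real"
    and kappa :: "'h \<Rightarrow> 'h \<times> 's \<Rightarrow> real"
  assumes machine: "markov_kernel gamma"
    and pos: "\<And>y y' s. gamma (y, s) y' > 0"
    and interp: "consistent_bayes_filter gamma psiH kappa"
  shows "\<forall>y y'. psiH y = psiH y'"
proof (intro allI ext)
  fix y y' h
  have "\<And>z s. gamma (y, s) z \<noteq> 0"
    using pos by (metis less_irrefl)
  then show "psiH y h = psiH y' h"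
    using consistent_bayes_filter_psiH_eq_marginal[OF interp] by metis
qed

end
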